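(* Let $G=(V,E)$ be a simple graph with $|V|=n$, adjacency matrix $A$, and let $D$ be the diagonal matrix of vertex degrees of $G$. A vector $x\in\{0,1\}^n$ solves $\mathrm{LCP}(A+I,-\mathbf{e})$ if and only if $$0\leq (A+I)x-\mathbf{e}\leq (D-I)(\mathbf{e}-x),$$ where $I$ is the $n\times n$ identity and $\mathbf{e}$ the all-ones vector.
   Context: $x$ solves $\mathrm{LCP}(A+I,-\mathbf{e})$ iff $x\geq 0$, $(A+I)x\geq\mathbf{e}$ and $x^\top((A+I)x-\mathbf{e})=0$. Inequalities between vectors are componentwise. *)

theory Defs
  imports "HOL-Analysis.Analysis"
begin

definition simple_graph :: "('n \<Rightarrow> 'n \<Rightarrow> bool) \<Rightarrow> bool" where
  "simple_graph E \<longleftrightarrow> (\<forall>u v. E u v \<longleftrightarrow> E v u) \<and> (\<forall>v. \<not> E v v)"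

definition adj_matrix :: "('n::finite \<Rightarrow> 'n \<Rightarrow> bool) \<Rightarrow> real^'n^'n" where
  "adj_matrix E = (\<chi> i j. if E i j then 1 else 0)"

definition degree :: "('n::finite \<Rightarrow> 'n \<Rightarrow> bool) \<Rightarrow> 'n \<Rightarrow> nat" where
  "degree E v = card {u. E v u}"

definition degree_matrix :: "('n::finite \<Rightarrow> 'n \<Rightarrow> bool) \<Rightarrow> real^'n^'n" where
  "degree_matrix E = (\<chi> i j. if i = j then real (degree E i) else 0)"

definition ones_vec :: "real^'n" where
  "ones_vec = (\<chi> i. 1)"

definition solves_LCP :: "real^'n^'n \<Rightarrow> real^'n \<Rightarrow> real^'n::finite \<Rightarrow> bool" where
  "solves_LCP M q x \<longleftrightarrow> (\<forall>i. 0 \<le> x $ i) \<and> (\<forall>i. 0 \<le> (M *v x + q) $ i)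
     \<and> x \<bullet> (M *v x + q) = 0"

end

theory Submission
  imports Defs
begin

text \<open>Writing \<open>w = (A + I) x - e\<close>, the \<open>i\<close>-th entry is \<open>w\<^sub>i = x\<^sub>i + s\<^sub>i - 1\<close>, where \<open>s\<^sub>i\<close>
counts the neighbours \<open>j\<close> of \<open>i\<close> with \<open>x\<^sub>j = 1\<close>, so \<open>s\<^sub>i \<le> deg i\<close>. The LCP amounts to
\<open>w \<ge> 0\<close> together with complementarity \<open>x\<^sub>i w\<^sub>i = 0\<close>. For a binary \<open>x\<close> the right-hand
bound \<open>(deg i - 1)(1 - x\<^sub>i)\<close> encodes exactly this complementarity: it is \<open>0\<close> when
\<open>x\<^sub>i = 1\<close>, forcing \<open>w\<^sub>i = 0\<close>, and it is \<open>deg i - 1 \<ge> s\<^sub>i - 1 = w\<^sub>i\<close> when \<open>x\<^sub>i = 0\<close>,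
where it holds automatically.\<close>

lemma solves_LCP_iff_componentwise:
  "solves_LCP M q x \<longleftrightarrow>
    (\<forall>i. 0 \<le> x $ i \<and> 0 \<le> (M *v x + q) $ i \<and> x $ i * (M *v x + q) $ i = 0)"
proof -
  define w where "w = M *v x + q"
  have "x \<bullet> w = 0 \<longleftrightarrow> (\<forall>i. x $ i * w $ i = 0)"
    if "\<forall>i. 0 \<le> x $ i" "\<forall>i. 0 \<le> w $ i"
    using that by (simp add: inner_vec_def sum_nonneg_eq_0_iff)
  then show ?thesis
    unfolding solves_LCP_def w_def[symmetric] by auto
qed

lemma adj_matrix_mult_vec_nth:
  "(adj_matrix E *v x) $ i = (\<Sum>j | E i j. x $ j)"
  by (simp add: matrix_vector_mult_def adj_matrix_def if_distrib[of "\<lambda>c. c * _"] sum.If_cases)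

lemma degree_matrix_mult_vec_nth:
  "(degree_matrix E *v x) $ i = real (degree E i) * x $ i"
  by (simp add: matrix_vector_mult_def degree_matrix_def if_distrib[of "\<lambda>c. c * _"] cong: if_cong)

lemma neighbour_sum_le_degree:
  fixes x :: "real^'n::finite"
  assumes "\<forall>j. x $ j \<le> 1"
  shows "(\<Sum>j | E i j. x $ j) \<le> real (degree E i)"
proof -
  have "(\<Sum>j | E i j. x $ j) \<le> (\<Sum>j | E i j. 1)"
    using assms by (intro sum_mono) auto
  then show ?thesis
    by (simp add: degree_def)
qed

lemma complementarity_iff_degree_bound:
  fixes a s d :: real
  assumes "a = 0 \<or> a = 1" and "s \<le> d"
  shows "(0 \<le> a + s - 1 \<and> a * (a + s - 1) = 0) \<longleftrightarrow>
    (0 \<le> a + s - 1 \<and> a + s - 1 \<le> (d - 1) * (1 - a))"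
  using assms by auto

theorem lemma7:
  fixes E :: "'n::finite \<Rightarrow> 'n \<Rightarrow> bool" and x :: "real^'n"
  assumes "simple_graph E"
    and "\<forall>i. x $ i = 0 \<or> x $ i = 1"
  shows "solves_LCP (adj_matrix E + mat 1) (- ones_vec) x \<longleftrightarrow>
    (\<forall>i. 0 \<le> ((adj_matrix E + mat 1) *v x - ones_vec) $ i \<and>
         ((adj_matrix E + mat 1) *v x - ones_vec) $ i
           \<le> ((degree_matrix E - mat 1) *v (ones_vec - x)) $ i)"
proof -
  define s where "s i = (\<Sum>j | E i j. x $ j)" for i
  have x_unit: "0 \<le> x $ i \<and> x $ i \<le> 1" for i
    using assms(2) by (metis order_refl zero_le_one)
  have residual: "((adj_matrix E + mat 1) *v x - ones_vec) $ i = x $ i + s i - 1" for i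
    by (simp add: algebra_simps adj_matrix_mult_vec_nth s_def ones_vec_def)
  have bound: "((degree_matrix E - mat 1) *v (ones_vec - x)) $ i
      = (real (degree E i) - 1) * (1 - x $ i)" for i
    by (simp add: algebra_simps degree_matrix_mult_vec_nth ones_vec_def)
  have "s i \<le> real (degree E i)" for i
    unfolding s_def using x_unit by (intro neighbour_sum_le_degree) auto
  then have "(0 \<le> x $ i + s i - 1 \<and> x $ i * (x $ i + s i - 1) = 0) \<longleftrightarrow>
      (0 \<le> x $ i + s i - 1 \<and> x $ i + s i - 1 \<le> (real (degree E i) - 1) * (1 - x $ i))" for i
    using assms(2) by (intro complementarity_iff_degree_bound) auto
  moreover note x_unit
  ultimately show ?thesis
    unfolding solves_LCP_iff_componentwise residual[symmetric] bound[symmetric]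
    by (simp add: diff_conv_add_uminus[symmetric])
qed

end
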